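(* Under the hypotheses of the previous lemma, assume additionally that $\boldsymbol{\Sigma}_k$ is positive semidefinite. Then for all $\boldsymbol{w}=(\boldsymbol{x},\boldsymbol{\lambda})\in\Omega$, $$f(\boldsymbol{x})-f(\tilde{\boldsymbol{x}}^k)+(\boldsymbol{w}-\tilde{\boldsymbol{w}}^k)^T\boldsymbol{\Gamma}(\boldsymbol{w})+\frac1{2\gamma}\Big(\|\boldsymbol{w}-\boldsymbol{w}^k\|_{\boldsymbol{\Sigma}_k}^2-\|\boldsymbol{w}-\boldsymbol{w}^{k+1}\|_{\boldsymbol{\Sigma}_k}^2\Big)\ge 0.$$
   Context: Setting: $\mathcal{X}\subset\mathbb{R}^n$ nonempty closed convex; $f$ convex; $\phi_i$ convex, continuously differentiable; $\Phi=(\phi_1,\dots,\phi_m)^T$, Jacobian $\mathcal{D}\Phi$; $\Omega=\mathcal{X}\times\mathbb{R}^m_+$; $\boldsymbol{\Gamma}(\boldsymbol{w})=(\mathcal{D}\Phi(\boldsymbol{x})^T\boldsymbol{\lambda},-\Phi(\boldsymbol{x}))$. Hypotheses of the previous lemma: $\gamma\in(0,2)$, $r_k,s_k>0$, $\tilde{\boldsymbol{w}}^k\in\Omega$ satisfies $f(\boldsymbol{x})-f(\tilde{\boldsymbol{x}}^k)+(\boldsymbol{w}-\tilde{\boldsymbol{w}}^k)^T\{\boldsymbol{\Gamma}(\tilde{\boldsymbol{w}}^k)+\boldsymbol{\Sigma}_k(\tilde{\boldsymbol{w}}^k-\boldsymbol{w}^k)\}\ge0$ for all $\boldsymbol{w}\in\Omega$,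 $\boldsymbol{w}^{k+1}=\boldsymbol{w}^k-\gamma(\boldsymbol{w}^k-\tilde{\boldsymbol{w}}^k)$, where $\boldsymbol{\Sigma}_k=\begin{pmatrix} r_k\boldsymbol{I}_n & -\mathcal{D}\Phi(\tilde{\boldsymbol{x}}^k)^T\\ -\mathcal{D}\Phi(\tilde{\boldsymbol{x}}^k) & s_k\boldsymbol{I}_m\end{pmatrix}$; $\|\boldsymbol{v}\|_{\boldsymbol{H}}^2=\boldsymbol{v}^T\boldsymbol{H}\boldsymbol{v}$. *)

theory Defs
  imports "HOL-Analysis.Analysis"
begin

text \<open>Points w = (x, lambda) of R^n x R^m are pairs; the inner product on pairs is the
  standard one (sum of the componentwise inner products).\<close>

definition Omega :: "(real^'n) set \<Rightarrow> ((real^'n) \<times> (real^'m)) set" where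
  "Omega X = X \<times> {l. \<forall>i. 0 \<le> l $ i}"

definition Gamma :: "(real^'n \<Rightarrow> real^'m) \<Rightarrow> (real^'n \<Rightarrow> real^'n^'m)
     \<Rightarrow> (real^'n) \<times> (real^'m) \<Rightarrow> (real^'n) \<times> (real^'m)" where
  "Gamma Phi DPhi w = (transpose (DPhi (fst w)) *v snd w, - Phi (fst w))"

text \<open>The block matrix Sigma = [[r I_n, -A^T], [-A, s I_m]] acting on a pair.\<close>
definition Sigma :: "real \<Rightarrow> real \<Rightarrow> real^'n^'m
     \<Rightarrow> (real^'n) \<times> (real^'m) \<Rightarrow> (real^'n) \<times> (real^'m)" where
  "Sigma r s A v = (r *\<^sub>R fst v - transpose A *v snd v, - (A *v fst v) + s *\<^sub>R snd v)"

definition Hnorm2 :: "('a::real_inner \<Rightarrow> 'a) \<Rightarrow> 'a \<Rightarrow> real" where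
  "Hnorm2 H v = v \<bullet> H v"

definition psd :: "('a::real_inner \<Rightarrow> 'a) \<Rightarrow> bool" where
  "psd H \<longleftrightarrow> (\<forall>v. 0 \<le> v \<bullet> H v)"

end

theory Submission
  imports Defs
begin

text \<open>Monotonicity of \<open>Gamma\<close> on \<open>Omega X\<close> (a consequence of the gradient inequality for the
  convex components of \<open>Phi\<close> and of \<open>\<lambda> \<ge> 0\<close>) turns the variational inequality at \<open>Gamma wt\<close>
  into one at \<open>Gamma w\<close>. The proximal term \<open>(w - wt)\<^sup>T Sigma (wt - wk)\<close> is then bounded by the
  difference of the \<open>Sigma\<close>-norms via the three-point identity for the relaxed step
  \<open>wk1 = wk - \<gamma> (wk - wt)\<close>; the remainder \<open>(1 - \<gamma>/2) \<parallel>wk - wt\<parallel>\<^sup>2\<^sub>Sigma\<close> is nonnegative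
  because \<open>Sigma\<close> is positive semidefinite and \<open>\<gamma> < 2\<close>.\<close>

lemma convex_on_gradient_inequality:
  fixes g :: "'a::real_normed_vector \<Rightarrow> real"
  assumes convex: "convex_on UNIV g" and deriv: "(g has_derivative g') (at x)"
  shows "g' (y - x) \<le> g y - g x"
proof -
  define h where "h t = g (x + t *\<^sub>R (y - x))" for t :: real
  have "convex_on UNIV h"
  proof (rule convex_onI)
    fix t t1 t2 :: real assume "0 < t" "t < 1"
    have "x + ((1 - t) *\<^sub>R t1 + t *\<^sub>R t2) *\<^sub>R (y - x)
        = (1 - t) *\<^sub>R (x + t1 *\<^sub>R (y - x)) + t *\<^sub>R (x + t2 *\<^sub>R (y - x))"
      by (simp add: algebra_simps)
    then show "h ((1 - t) *\<^sub>R t1 + t *\<^sub>R t2) \<le> (1 - t) * h t1 + t * h t2"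
      unfolding h_def using convex_onD[OF convex, of t] \<open>0 < t\<close> \<open>t < 1\<close> by auto
  qed simp
  moreover have "(h has_field_derivative g' (y - x)) (at 0)"
  proof -
    have "((\<lambda>t. x + t *\<^sub>R (y - x)) has_derivative (\<lambda>t. t *\<^sub>R (y - x))) (at 0)"
      by (auto intro!: derivative_eq_intros)
    from has_derivative_compose[OF this] deriv
    have "(h has_derivative (\<lambda>t. g' (t *\<^sub>R (y - x)))) (at 0)"
      unfolding h_def by (simp add: o_def)
    moreover have "(\<lambda>t. g' (t *\<^sub>R (y - x))) = (*) (g' (y - x))"
      using linear_scale[OF has_derivative_linear[OF deriv]] by (auto simp: mult.commute)
    ultimately show ?thesis
      unfolding has_field_derivative_def by simp
  qed
  ultimately have "g' (y - x) * (1 - 0) \<le> h 1 - h 0"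
    by (intro convex_on_imp_above_tangent) auto
  then show ?thesis by (simp add: h_def)
qed

lemma nonneg_inner_linearization_gap:
  fixes Phi :: "real^'n \<Rightarrow> real^'m"
  assumes convex: "\<And>i. convex_on UNIV (\<lambda>x. Phi x $ i)"
    and deriv: "\<And>x. (Phi has_derivative (\<lambda>h. DPhi x *v h)) (at x)"
    and l_nonneg: "\<forall>i. 0 \<le> l $ i"
  shows "0 \<le> l \<bullet> (Phi y - Phi x - DPhi x *v (y - x))"
proof -
  have "0 \<le> (Phi y - Phi x - DPhi x *v (y - x)) $ i" for i
    using convex_on_gradient_inequality
        [OF convex bounded_linear.has_derivative[OF bounded_linear_vec_nth deriv], of x y]
    by simp
  then show ?thesis
    using l_nonneg unfolding inner_vec_def by (auto intro!: sum_nonneg)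
qed

lemma inner_vector_matrix: "(x::real^'n) \<bullet> ((l::real^'m) v* A) = l \<bullet> (A *v x)"
  by (metis dot_lmul_matrix inner_commute)

lemma inner_transpose_matrix_vector:
  "(transpose A *v (l::real^'m)) \<bullet> (x::real^'n) = l \<bullet> (A *v x)"
  by (metis dot_lmul_matrix transpose_transpose vector_transpose_matrix)

text \<open>The difference is the sum of the two nonnegative linearization gaps
  \<open>\<lambda>\<^sup>T (Phi xt - Phi x - DPhi x (xt - x))\<close> and \<open>\<lambda>t\<^sup>T (Phi x - Phi xt - DPhi xt (x - xt))\<close>.\<close>

lemma Gamma_monotone:
  fixes Phi :: "real^'n \<Rightarrow> real^'m"
  assumes convex: "\<And>i. convex_on UNIV (\<lambda>x. Phi x $ i)"
    and deriv: "\<And>x. (Phi has_derivative (\<lambda>h. DPhi x *v h)) (at x)"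
    and w_nonneg: "\<forall>i. 0 \<le> snd w $ i" and wt_nonneg: "\<forall>i. 0 \<le> snd wt $ i"
  shows "(w - wt) \<bullet> Gamma Phi DPhi wt \<le> (w - wt) \<bullet> Gamma Phi DPhi w"
proof -
  obtain x l xt lt where w: "w = (x, l)" and wt: "wt = (xt, lt)"
    by (cases w, cases wt)
  have gap: "0 \<le> l \<bullet> (Phi xt - Phi x - DPhi x *v (xt - x))"
    "0 \<le> lt \<bullet> (Phi x - Phi xt - DPhi xt *v (x - xt))"
    using nonneg_inner_linearization_gap[OF convex deriv] w_nonneg wt_nonneg w wt by simp_all
  have "DPhi x *v (xt - x) = - (DPhi x *v (x - xt))"
    by (metis matrix_vector_mult_diff_distrib minus_diff_eq)
  then have "(w - wt) \<bullet> Gamma Phi DPhi w - (w - wt) \<bullet> Gamma Phi DPhi wt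
      = l \<bullet> (Phi xt - Phi x - DPhi x *v (xt - x)) + lt \<bullet> (Phi x - Phi xt - DPhi xt *v (x - xt))"
    unfolding w wt Gamma_def
    by (simp add: inner_Pair inner_transpose_matrix_vector inner_vector_matrix inner_diff_left
        inner_diff_right inner_commute algebra_simps)
  with gap show ?thesis by linarith
qed

lemma linear_Sigma: "linear (Sigma r s A)"
  by (rule linearI)
    (simp_all add: Sigma_def matrix_vector_right_distrib matrix_vector_mult_scaleR algebra_simps)

lemma Sigma_symmetric: "u \<bullet> Sigma r s A v = v \<bullet> Sigma r s A u"
  by (cases u; cases v) (simp add: Sigma_def inner_Pair algebra_simps,
      metis dot_lmul_matrix inner_commute add.commute)

lemma inner_le_Hnorm2_diff_relaxed:
  fixes H :: "'a::real_inner \<Rightarrow> 'a"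
  assumes "linear H" and self_adjoint: "\<And>u v. u \<bullet> H v = v \<bullet> H u" and "psd H"
    and "0 < \<gamma>" "\<gamma> \<le> 2"
  shows "(w - wt) \<bullet> H (wt - wk)
     \<le> (1 / (2 * \<gamma>)) * (Hnorm2 H (w - wk) - Hnorm2 H (w - (wk - \<gamma> *\<^sub>R (wk - wt))))"
proof -
  interpret H: linear H by fact
  define a d where "a = w - wk" and "d = wk - wt"
  have shift: "w - wt = a + d" "wt - wk = - d" "w - (wk - \<gamma> *\<^sub>R (wk - wt)) = a + \<gamma> *\<^sub>R d"
    by (auto simp: a_def d_def algebra_simps)
  have expand: "Hnorm2 H a - Hnorm2 H (a + \<gamma> *\<^sub>R d)
      = - 2 * \<gamma> * (a \<bullet> H d) - \<gamma>\<^sup>2 * (d \<bullet> H d)"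
    using self_adjoint[of d a]
    by (simp add: Hnorm2_def H.add H.scale inner_add_left inner_add_right power2_eq_square
        algebra_simps)
  have "(a + d) \<bullet> H (- d) = - (a \<bullet> H d) - d \<bullet> H d"
    by (simp add: H.neg inner_add_left)
  also have "\<dots> \<le> - (a \<bullet> H d) - \<gamma> / 2 * (d \<bullet> H d)"
  proof -
    have "0 \<le> d \<bullet> H d" using \<open>psd H\<close> unfolding psd_def ..
    then have "\<gamma> * (d \<bullet> H d) \<le> 2 * (d \<bullet> H d)"
      using \<open>\<gamma> \<le> 2\<close> by (rule mult_right_mono[rotated])
    then show ?thesis by simp
  qed
  also have "\<dots> = (1 / (2 * \<gamma>)) * (Hnorm2 H a - Hnorm2 H (a + \<gamma> *\<^sub>R d))"
    unfolding expand using \<open>0 < \<gamma>\<close> by (simp add: field_simps power2_eq_square)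
  finally show ?thesis
    unfolding shift a_def[symmetric] .
qed

theorem mainTheorem5:
  fixes X :: "(real^'n) set"
    and f :: "real^'n \<Rightarrow> real"
    and Phi :: "real^'n \<Rightarrow> real^'m"
    and DPhi :: "real^'n \<Rightarrow> real^'n^'m"
    and \<gamma> r s :: real
    and wk wt wk1 :: "(real^'n) \<times> (real^'m)"
  assumes X_ne: "X \<noteq> {}" and X_closed: "closed X" and X_convex: "convex X"
    and f_convex: "convex_on UNIV f"
    and Phi_convex: "\<And>i. convex_on UNIV (\<lambda>x. Phi x $ i)"
    and Phi_deriv: "\<And>x. (Phi has_derivative (\<lambda>h. DPhi x *v h)) (at x)"
    and DPhi_cont: "continuous_on UNIV DPhi"
    and gamma: "0 < \<gamma>" "\<gamma> < 2"
    and rs: "0 < r" "0 < s"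
    and wt_in: "wt \<in> Omega X"
    and VI: "\<And>w. w \<in> Omega X \<Longrightarrow>
        0 \<le> f (fst w) - f (fst wt)
           + (w - wt) \<bullet> (Gamma Phi DPhi wt + Sigma r s (DPhi (fst wt)) (wt - wk))"
    and update: "wk1 = wk - \<gamma> *\<^sub>R (wk - wt)"
    and Sigma_psd: "psd (Sigma r s (DPhi (fst wt)))"
  shows "\<forall>w \<in> Omega X.
     0 \<le> f (fst w) - f (fst wt) + (w - wt) \<bullet> Gamma Phi DPhi w
        + (1 / (2 * \<gamma>)) * (Hnorm2 (Sigma r s (DPhi (fst wt))) (w - wk)
                            - Hnorm2 (Sigma r s (DPhi (fst wt))) (w - wk1))"
proof
  fix w :: "(real^'n) \<times> (real^'m)" assume w_in: "w \<in> Omega X"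
  let ?S = "Sigma r s (DPhi (fst wt))"
  have "(w - wt) \<bullet> Gamma Phi DPhi wt \<le> (w - wt) \<bullet> Gamma Phi DPhi w"
    using Gamma_monotone[OF Phi_convex Phi_deriv] w_in wt_in by (auto simp: Omega_def)
  moreover have "(w - wt) \<bullet> ?S (wt - wk) \<le> (1 / (2 * \<gamma>)) * (Hnorm2 ?S (w - wk) - Hnorm2 ?S (w - wk1))"
    unfolding update
    using inner_le_Hnorm2_diff_relaxed[OF linear_Sigma Sigma_symmetric Sigma_psd] gamma by simp
  moreover have "0 \<le> f (fst w) - f (fst wt) + (w - wt) \<bullet> Gamma Phi DPhi wt + (w - wt) \<bullet> ?S (wt - wk)"
    using VI[OF w_in] by (simp add: inner_add_right)
  ultimately show "0 \<le> f (fst w) - f (fst wt) + (w - wt) \<bullet> Gamma Phi DPhi w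
      + (1 / (2 * \<gamma>)) * (Hnorm2 ?S (w - wk) - Hnorm2 ?S (w - wk1))"
    by linarith
qed

end
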